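(* For every positive integer $\ell$ and every integer $n\ge n_0:=3\ell+4$, there is a directed tree with $n$ vertices, in which every vertex has degree at most three and every directed path has length at most $\ell$, whose span is at least $\lceil(\ell+1)/2\rceil=\lceil(n_0-1)/6\rceil$.
   Context: A directed tree is a DAG (directed acyclic graph) whose underlying undirected graph is a tree. An upward-planar layered drawing of a DAG $G$ maps each vertex $v$ to a point in the plane whose y-coordinate $y(v)$ is an integer, and each edge $(u,v)$ (directed from tail $u$ to head $v$) to a strictly y-monotone curve going upward from $u$ to $v$ (so $y(u)<y(v)$), such that no two edges intersect except at common endpoints. The span of an edge $(u,v)$ in such a drawing $\Gamma$ is $y(v)-y(u)$; the span of $\Gamma$ is the maximum span of its edges; the span of an upward-planar DAG $G$ is the minimum span over all its upward-planar layered drawings. The degree of a vertex is its total number of incident edges. The length of a directed path is its number of edges. *)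

theory Defs
  imports "HOL-Analysis.Analysis"
begin

text \<open>Directed tree: a DAG whose underlying undirected graph is a (simple) tree,
  i.e. no loops, no pair of opposite arcs, connected, and |E| = |V| - 1.\<close>
definition directed_tree :: "'a set \<Rightarrow> ('a \<times> 'a) set \<Rightarrow> bool" where
  "directed_tree V E \<longleftrightarrow>
     finite V \<and> V \<noteq> {} \<and> E \<subseteq> V \<times> V \<and>
     acyclic E \<and>
     (\<forall>u v. (u, v) \<in> E \<longrightarrow> (v, u) \<notin> E) \<and>
     (\<forall>u\<in>V. \<forall>v\<in>V. (u, v) \<in> (E \<union> E\<inverse>)\<^sup>*) \<and>
     card E + 1 = card V"

definition degree :: "('a \<times> 'a) set \<Rightarrow> 'a \<Rightarrow> nat" where
  "degree E v = card {e \<in> E. fst e = v \<or> snd e = v}"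

definition vpos :: "('a \<Rightarrow> real) \<Rightarrow> ('a \<Rightarrow> int) \<Rightarrow> 'a \<Rightarrow> real \<times> real" where
  "vpos x y v = (x v, real_of_int (y v))"

definition upward_layered_drawing ::
  "'a set \<Rightarrow> ('a \<times> 'a) set \<Rightarrow> ('a \<Rightarrow> real) \<Rightarrow> ('a \<Rightarrow> int)
     \<Rightarrow> ('a \<times> 'a \<Rightarrow> real \<Rightarrow> real \<times> real) \<Rightarrow> bool" where
  "upward_layered_drawing V E x y c \<longleftrightarrow>
     inj_on (vpos x y) V \<and>
     (\<forall>e\<in>E. path (c e) \<and> pathstart (c e) = vpos x y (fst e) \<and>
              pathfinish (c e) = vpos x y (snd e) \<and>
              (\<forall>s t. 0 \<le> s \<and> s < t \<and> t \<le> 1 \<longrightarrow> snd (c e s) < snd (c e t))) \<and>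
     (\<forall>e\<in>E. \<forall>w\<in>V. vpos x y w \<in> path_image (c e) \<longrightarrow> w = fst e \<or> w = snd e) \<and>
     (\<forall>e\<in>E. \<forall>e'\<in>E. e \<noteq> e' \<longrightarrow>
        path_image (c e) \<inter> path_image (c e') \<subseteq>
          vpos x y ` ({fst e, snd e} \<inter> {fst e', snd e'}))"

definition upward_planar :: "'a set \<Rightarrow> ('a \<times> 'a) set \<Rightarrow> bool" where
  "upward_planar V E \<longleftrightarrow> (\<exists>x y c. upward_layered_drawing V E x y c)"

definition drawing_span :: "('a \<times> 'a) set \<Rightarrow> ('a \<Rightarrow> int) \<Rightarrow> nat" where
  "drawing_span E y = Max (insert 0 ((\<lambda>(u, v). nat (y v - y u)) ` E))"

definition dag_span :: "'a set \<Rightarrow> ('a \<times> 'a) set \<Rightarrow> nat" where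
  "dag_span V E = (LEAST s. \<exists>x y c. upward_layered_drawing V E x y c \<and> drawing_span E y = s)"

end

theory Submission
  imports Defs
begin

(* The tree has a root u with three children v_0, v_1, v_2, each the midpoint of a directed
   path (a column) of length 2s, where s = l div 2; a zig-zag path pads it to n vertices.
   So all degrees are at most three and directed paths have length at most max (2s) 1 <= l.

   Suppose a drawing had span at most s. Then each column rises by at least s below and above
   its midpoint, so it starts no higher than u and ends no lower than any v_j. Just above u
   the three arcs u v_i are ordered from left to right, with v_m in the middle. The column
   through v_m avoids u, the arcs u v_l and u v_r and the other two columns, which keeps it
   strictly on one side of the arc u v_m, so it cannot pass through v_m. Hence every drawing
   has span at least s + 1 = ceil ((l + 1) / 2), while an explicit straight-line drawing shows
   that the tree is upward planar. *)

section \<open>Curves monotone in the y-direction\<close>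

definition y_monotone_path :: "(real \<Rightarrow> real \<times> real) \<Rightarrow> bool" where
  "y_monotone_path g \<longleftrightarrow> path g \<and> strict_mono_on {0..1} (\<lambda>t. snd (g t))"

definition heights :: "(real \<Rightarrow> real \<times> real) \<Rightarrow> real set" where
  "heights g = {snd (pathstart g)..snd (pathfinish g)}"

definition x_at :: "(real \<Rightarrow> real \<times> real) \<Rightarrow> real \<Rightarrow> real" where
  "x_at g t = fst (g (the_inv_into {0..1} (\<lambda>u. snd (g u)) t))"

lemma y_monotone_path_heights:
  assumes "y_monotone_path g"
  shows "(\<lambda>u. snd (g u)) ` {0..1} = heights g"
proof
  have mono: "strict_mono_on {0..1} (\<lambda>t. snd (g t))"
    using assms unfolding y_monotone_path_def by simp
  show "(\<lambda>u. snd (g u)) ` {0..1} \<subseteq> heights g"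
    using strict_mono_on_leD[OF mono, of 0] strict_mono_on_leD[OF mono, of _ 1]
    by (auto simp: heights_def pathstart_def pathfinish_def)
  have "continuous_on {0..1} (\<lambda>u. snd (g u))"
    using assms unfolding y_monotone_path_def path_def by (auto intro!: continuous_intros)
  then show "heights g \<subseteq> (\<lambda>u. snd (g u)) ` {0..1}"
    using IVT'[of "\<lambda>u. snd (g u)" 0 _ 1]
    by (force simp: heights_def pathstart_def pathfinish_def)
qed

lemma x_at_path_image:
  assumes g: "y_monotone_path g" and t: "t \<in> heights g"
  shows "(x_at g t, t) \<in> path_image g"
proof -
  have inj: "inj_on (\<lambda>u. snd (g u)) {0..1}"
    using g strict_mono_on_imp_inj_on unfolding y_monotone_path_def by blast
  obtain u where u: "u \<in> {0..1}" "t = snd (g u)"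
    using t y_monotone_path_heights[OF g] by blast
  have "the_inv_into {0..1} (\<lambda>u. snd (g u)) t = u"
    using the_inv_into_f_f[OF inj u(1)] u(2) by simp
  then have "(x_at g t, t) = g u"
    unfolding x_at_def u(2) by simp
  then show ?thesis
    using u(1) unfolding path_image_def by simp
qed

lemma x_at_eq:
  assumes g: "y_monotone_path g" and p: "p \<in> path_image g"
  shows "x_at g (snd p) = fst p" and "snd p \<in> heights g"
proof -
  have inj: "inj_on (\<lambda>u. snd (g u)) {0..1}"
    using g strict_mono_on_imp_inj_on unfolding y_monotone_path_def by blast
  obtain u where u: "u \<in> {0..1}" "p = g u"
    using p unfolding path_image_def by blast
  show "x_at g (snd p) = fst p"
    using the_inv_into_f_f[OF inj u(1)] u(2) unfolding x_at_def by simp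
  show "snd p \<in> heights g"
    using y_monotone_path_heights[OF g] u by blast
qed

lemma continuous_on_x_at:
  assumes g: "y_monotone_path g"
  shows "continuous_on (heights g) (x_at g)"
proof -
  have cont_g: "continuous_on {0..1} g"
    using g unfolding y_monotone_path_def path_def by simp
  have inj: "inj_on (\<lambda>u. snd (g u)) {0..1}"
    using g strict_mono_on_imp_inj_on unfolding y_monotone_path_def by blast
  have "continuous_on (heights g) (the_inv_into {0..1} (\<lambda>u. snd (g u)))"
    using continuous_on_inv_into[OF _ compact_Icc inj] cont_g y_monotone_path_heights[OF g]
    by (metis continuous_on_snd)
  moreover have "the_inv_into {0..1} (\<lambda>u. snd (g u)) ` heights g \<subseteq> {0..1}"
    using the_inv_into_into[OF inj] y_monotone_path_heights[OF g] by blast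
  ultimately have "continuous_on (heights g) (g \<circ> the_inv_into {0..1} (\<lambda>u. snd (g u)))"
    using continuous_on_compose continuous_on_subset[OF cont_g] by blast
  then show ?thesis
    unfolding x_at_def comp_def by (rule continuous_on_fst)
qed

lemma x_at_order_preserved:
  assumes g: "y_monotone_path g" and h: "y_monotone_path h" and "a \<le> b"
    and band: "{a..b} \<subseteq> heights g" "{a..b} \<subseteq> heights h"
    and apart: "\<And>p. p \<in> path_image g \<Longrightarrow> p \<in> path_image h \<Longrightarrow> snd p \<notin> {a..b}"
  shows "x_at g a < x_at h a \<longleftrightarrow> x_at g b < x_at h b"
proof -
  define d where "d t = x_at h t - x_at g t" for t
  have cont: "continuous_on {a..b} d"
    unfolding d_def using band
    by (intro continuous_intros continuous_on_subset[OF continuous_on_x_at] g h)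
  have nonzero: "d t \<noteq> 0" if "t \<in> {a..b}" for t
  proof
    assume "d t = 0"
    then have "(x_at g t, t) \<in> path_image h"
      using x_at_path_image[OF h, of t] band that unfolding d_def by auto
    then show False
      using apart x_at_path_image[OF g, of t] band that by fastforce
  qed
  have "0 < d a \<longleftrightarrow> 0 < d b"
  proof
    assume "0 < d a"
    show "0 < d b"
    proof (rule ccontr)
      assume "\<not> 0 < d b"
      then obtain t where "a \<le> t" "t \<le> b" "d t = 0"
        using IVT2'[of d b 0 a] cont \<open>0 < d a\<close> \<open>a \<le> b\<close> by force
      then show False using nonzero by simp
    qed
  next
    assume "0 < d b"
    show "0 < d a"
    proof (rule ccontr)
      assume "\<not> 0 < d a"
      then obtain t where "a \<le> t" "t \<le> b" "d t = 0"
        using IVT'[of d a 0 b] cont \<open>0 < d b\<close> \<open>a \<le> b\<close> by force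
      then show False using nonzero by simp
    qed
  qed
  then show ?thesis unfolding d_def by simp
qed

lemma y_monotone_path_join:
  assumes g1: "y_monotone_path g1" and g2: "y_monotone_path g2"
    and meet: "pathfinish g1 = pathstart g2"
  shows "y_monotone_path (g1 +++ g2)"
  unfolding y_monotone_path_def
proof
  show "path (g1 +++ g2)"
    using g1 g2 meet unfolding y_monotone_path_def by simp
  have m1: "strict_mono_on {0..1} (\<lambda>t. snd (g1 t))" and m2: "strict_mono_on {0..1} (\<lambda>t. snd (g2 t))"
    using g1 g2 unfolding y_monotone_path_def by simp_all
  have mid: "snd (g1 1) = snd (g2 0)"
    using meet unfolding pathfinish_def pathstart_def by simp
  show "strict_mono_on {0..1} (\<lambda>t. snd ((g1 +++ g2) t))"
  proof (rule strict_mono_onI)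
    fix r t :: real assume r: "r \<in> {0..1}" and t: "t \<in> {0..1}" and "r < t"
    consider "t \<le> 1/2" | "r \<le> 1/2" "1/2 < t" | "1/2 < r"
      using \<open>r < t\<close> by linarith
    then show "snd ((g1 +++ g2) r) < snd ((g1 +++ g2) t)"
    proof cases
      case 1
      then show ?thesis
        using strict_mono_onD[OF m1, of "2 * r" "2 * t"] r t \<open>r < t\<close> by (simp add: joinpaths_def)
    next
      case 2
      have "snd (g1 (2 * r)) \<le> snd (g1 1)"
        using strict_mono_on_leD[OF m1, of "2 * r" 1] r 2 by simp
      moreover have "snd (g2 0) < snd (g2 (2 * t - 1))"
        using strict_mono_onD[OF m2, of 0 "2 * t - 1"] t 2 by simp
      ultimately show ?thesis
        using 2 mid by (simp add: joinpaths_def)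
    next
      case 3
      then show ?thesis
        using strict_mono_onD[OF m2, of "2 * r - 1" "2 * t - 1"] r t \<open>r < t\<close>
        by (simp add: joinpaths_def)
    qed
  qed
qed

definition mirror :: "real \<times> real \<Rightarrow> real \<times> real" where
  "mirror p = (- fst p, snd p)"

lemma fst_mirror [simp]: "fst (mirror p) = - fst p"
  and snd_mirror [simp]: "snd (mirror p) = snd p"
  by (simp_all add: mirror_def)

lemma inj_mirror: "inj mirror"
  by (rule injI) (simp add: mirror_def prod_eq_iff)

lemma y_monotone_path_mirror:
  assumes "y_monotone_path g"
  shows "y_monotone_path (mirror \<circ> g)"
proof -
  have "continuous_on UNIV mirror"
    unfolding mirror_def by (intro continuous_intros)
  then have "path (mirror \<circ> g)"
    using assms unfolding y_monotone_path_def
      by (intro path_continuous_image) (auto intro: continuous_on_subset)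
  then show ?thesis
    using assms unfolding y_monotone_path_def by (simp add: mirror_def comp_def)
qed

lemma x_at_mirror [simp]: "x_at (mirror \<circ> g) t = - x_at g t"
  by (simp add: x_at_def mirror_def)

lemma path_image_mirror_Int:
  "path_image (mirror \<circ> g) \<inter> path_image (mirror \<circ> h) = mirror ` (path_image g \<inter> path_image h)"
  by (simp add: path_image_compose image_Int[OF inj_mirror])

section \<open>Three arcs out of a vertex and three paths through their heads\<close>

lemma median_of_three:
  fixes a :: "nat \<Rightarrow> 'a::linorder"
  assumes "\<And>i j. i < 3 \<Longrightarrow> j < 3 \<Longrightarrow> i \<noteq> j \<Longrightarrow> a i \<noteq> a j"
  obtains l m r where "l < 3" "m < 3" "r < 3" "l \<noteq> m" "r \<noteq> m" "a l < a m" "a m < a r"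
proof -
  have "a 0 \<noteq> a 1" "a 0 \<noteq> a 2" "a 1 \<noteq> a 2"
    using assms by auto
  then consider "a 0 < a 1" "a 1 < a 2" | "a 0 < a 2" "a 2 < a 1" | "a 1 < a 0" "a 0 < a 2"
    | "a 1 < a 2" "a 2 < a 0" | "a 2 < a 0" "a 0 < a 1" | "a 2 < a 1" "a 1 < a 0"
    by (metis neqE order.strict_trans)
  then show ?thesis
    by cases (erule (1) that[rotated 5]; simp)+
qed

text \<open>\<open>E i\<close> are the drawn arcs from a vertex at \<open>U\<close> to its three children at \<open>P i\<close>,
  and \<open>G i\<close> is the drawn directed path through \<open>P i\<close>.\<close>
locale tripod =
  fixes E G :: "nat \<Rightarrow> real \<Rightarrow> real \<times> real" and U :: "real \<times> real" and P :: "nat \<Rightarrow> real \<times> real"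
  assumes E_mono: "\<And>i. i < 3 \<Longrightarrow> y_monotone_path (E i)"
    and G_mono: "\<And>i. i < 3 \<Longrightarrow> y_monotone_path (G i)"
    and E_start: "\<And>i. i < 3 \<Longrightarrow> pathstart (E i) = U"
    and E_finish: "\<And>i. i < 3 \<Longrightarrow> pathfinish (E i) = P i"
    and U_below_P: "\<And>i. i < 3 \<Longrightarrow> snd U < snd (P i)"
    and P_on_G: "\<And>i. i < 3 \<Longrightarrow> P i \<in> path_image (G i)"
    and E_E: "\<And>i j. i < 3 \<Longrightarrow> j < 3 \<Longrightarrow> i \<noteq> j \<Longrightarrow> path_image (E i) \<inter> path_image (E j) \<subseteq> {U}"
    and G_E: "\<And>i j. i < 3 \<Longrightarrow> j < 3 \<Longrightarrow> i \<noteq> j \<Longrightarrow> path_image (G i) \<inter> path_image (E j) = {}"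
    and G_E_same: "\<And>i. i < 3 \<Longrightarrow> path_image (G i) \<inter> path_image (E i) \<subseteq> {P i}"
    and G_G: "\<And>i j. i < 3 \<Longrightarrow> j < 3 \<Longrightarrow> i \<noteq> j \<Longrightarrow> path_image (G i) \<inter> path_image (G j) = {}"
    and U_notin_G: "\<And>i. i < 3 \<Longrightarrow> U \<notin> path_image (G i)"
begin

definition spans :: "nat \<Rightarrow> bool" where
  "spans i \<longleftrightarrow> snd (pathstart (G i)) \<le> snd U \<and> (\<forall>j<3. snd (P j) \<le> snd (pathfinish (G i)))"

lemma mirror_tripod: "tripod (\<lambda>i. mirror \<circ> E i) (\<lambda>i. mirror \<circ> G i) (mirror U) (\<lambda>i. mirror (P i))"
proof
  fix i j :: nat
  assume i: "i < 3"
  show "y_monotone_path (mirror \<circ> E i)" "y_monotone_path (mirror \<circ> G i)"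
    using y_monotone_path_mirror E_mono G_mono i by auto
  show "pathstart (mirror \<circ> E i) = mirror U" "pathfinish (mirror \<circ> E i) = mirror (P i)"
    using E_start E_finish i by (simp_all add: pathstart_compose pathfinish_compose)
  show "snd (mirror U) < snd (mirror (P i))"
    using U_below_P i by simp
  show "mirror (P i) \<in> path_image (mirror \<circ> G i)"
    using P_on_G i by (simp add: path_image_compose)
  show "mirror U \<notin> path_image (mirror \<circ> G i)"
    using U_notin_G i by (simp add: path_image_compose inj_image_mem_iff[OF inj_mirror])
  show "path_image (mirror \<circ> G i) \<inter> path_image (mirror \<circ> E i) \<subseteq> {mirror (P i)}"
    using image_mono[OF G_E_same[OF i], of mirror] by (simp add: path_image_mirror_Int)
  assume j: "j < 3" "i \<noteq> j"
  then show "path_image (mirror \<circ> E i) \<inter> path_image (mirror \<circ> E j) \<subseteq> {mirror U}"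
    "path_image (mirror \<circ> G i) \<inter> path_image (mirror \<circ> E j) = {}"
    "path_image (mirror \<circ> G i) \<inter> path_image (mirror \<circ> G j) = {}"
    using E_E G_E G_G i by (auto simp: path_image_mirror_Int)
qed

lemma spans_mirror: "tripod.spans (\<lambda>i. mirror \<circ> G i) (mirror U) (\<lambda>i. mirror (P i)) i \<longleftrightarrow> spans i"
  by (simp add: tripod.spans_def[OF mirror_tripod] spans_def pathstart_compose pathfinish_compose)

lemma E_heights: "i < 3 \<Longrightarrow> heights (E i) = {snd U..snd (P i)}"
  using E_start E_finish by (simp add: heights_def)

lemma G_heights: "spans i \<Longrightarrow> j < 3 \<Longrightarrow> {snd U..snd (P j)} \<subseteq> heights (G i)"
  unfolding spans_def heights_def by fastforce

lemma x_at_E_start: "i < 3 \<Longrightarrow> x_at (E i) (snd U) = fst U"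
  using x_at_eq(1)[OF E_mono pathstart_in_path_image] E_start by simp

lemma x_at_E_finish: "i < 3 \<Longrightarrow> x_at (E i) (snd (P i)) = fst (P i)"
  using x_at_eq(1)[OF E_mono pathfinish_in_path_image] E_finish by simp

lemma x_at_G_P: "i < 3 \<Longrightarrow> x_at (G i) (snd (P i)) = fst (P i)"
  using x_at_eq(1)[OF G_mono P_on_G] by simp

lemma G_E_order:
  assumes "m < 3" "i < 3" "spans m" "snd U \<le> a" "a \<le> b" "b \<le> snd (P i)" "m = i \<Longrightarrow> b < snd (P i)"
  shows "x_at (G m) a < x_at (E i) a \<longleftrightarrow> x_at (G m) b < x_at (E i) b"
proof (rule x_at_order_preserved[OF G_mono E_mono])
  show "{a..b} \<subseteq> heights (G m)" "{a..b} \<subseteq> heights (E i)"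
    using G_heights[of m i] E_heights[of i] assms by auto
  show "snd p \<notin> {a..b}" if "p \<in> path_image (G m)" "p \<in> path_image (E i)" for p
    using that G_E[of m i] G_E_same[of i] assms by (cases "m = i") fastforce+
qed (use assms in auto)

lemma E_E_order:
  assumes "l < 3" "m < 3" "l \<noteq> m" "snd U < a" "a \<le> b" "b \<le> snd (P l)" "b \<le> snd (P m)"
  shows "x_at (E l) a < x_at (E m) a \<longleftrightarrow> x_at (E l) b < x_at (E m) b"
proof (rule x_at_order_preserved[OF E_mono E_mono])
  show "{a..b} \<subseteq> heights (E l)" "{a..b} \<subseteq> heights (E m)"
    using E_heights assms by auto
  show "snd p \<notin> {a..b}" if "p \<in> path_image (E l)" "p \<in> path_image (E m)" for p
    using that E_E[of l m] assms by auto
qed (use assms in auto)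

lemma G_G_order:
  assumes "l < 3" "m < 3" "j < 3" "l \<noteq> m" "spans l" "spans m" "snd U \<le> a" "a \<le> b" "b \<le> snd (P j)"
  shows "x_at (G l) a < x_at (G m) a \<longleftrightarrow> x_at (G l) b < x_at (G m) b"
proof (rule x_at_order_preserved[OF G_mono G_mono])
  show "{a..b} \<subseteq> heights (G l)" "{a..b} \<subseteq> heights (G m)"
    using G_heights assms by fastforce+
  show "snd p \<notin> {a..b}" if "p \<in> path_image (G l)" "p \<in> path_image (G m)" for p
    using that G_G[of l m] assms by auto
qed (use assms in auto)

lemma G_side_of_U:
  assumes "m < 3" "i < 3" "spans m" "snd U < t" "t < snd (P i)"
  shows "x_at (G m) (snd U) < fst U \<longleftrightarrow> x_at (G m) t < x_at (E i) t"
  using G_E_order[of m i "snd U" t] x_at_E_start assms by simp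

lemma E_x_at_distinct:
  assumes "i < 3" "j < 3" "i \<noteq> j" "snd U < t" "t \<le> snd (P i)" "t \<le> snd (P j)"
  shows "x_at (E i) t \<noteq> x_at (E j) t"
proof
  assume "x_at (E i) t = x_at (E j) t"
  then have "(x_at (E i) t, t) \<in> path_image (E i) \<inter> path_image (E j)"
    using x_at_path_image[OF E_mono] E_heights assms by (metis IntI atLeastAtMost_iff less_imp_le)
  then show False
    using E_E[of i j] assms by auto
qed

text \<open>If \<open>E l\<close> ends below \<open>P m\<close>, then above \<open>P l\<close> the curve \<open>G l\<close> takes over its role of
  separating \<open>G m\<close> from \<open>E m\<close>.\<close>
lemma G_left_of_E_at_end:
  assumes l: "l < 3" and m: "m < 3" and "l \<noteq> m" and "spans l" "spans m"
    and t: "snd U < t" "t < snd (P l)" "t < snd (P m)"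
    and GE: "x_at (G m) t < x_at (E l) t" and EE: "x_at (E l) t < x_at (E m) t"
  shows "x_at (G m) (snd (P m)) < x_at (E m) (snd (P m))"
proof (cases "snd (P m) \<le> snd (P l)")
  case True
  have "x_at (G m) (snd (P m)) < x_at (E l) (snd (P m))"
    using GE G_E_order[of m l t "snd (P m)"] assms True by simp
  moreover have "x_at (E l) (snd (P m)) < x_at (E m) (snd (P m))"
    using EE E_E_order[of l m t "snd (P m)"] assms True by simp
  ultimately show ?thesis by simp
next
  case False
  have "x_at (G m) (snd (P l)) < x_at (E l) (snd (P l))"
    using GE G_E_order[of m l t "snd (P l)"] assms by simp
  moreover have "x_at (E l) (snd (P l)) < x_at (E m) (snd (P l))"
    using EE E_E_order[of l m t "snd (P l)"] assms False by simp
  ultimately have "x_at (G m) (snd (P l)) < x_at (G l) (snd (P l))"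
    and "x_at (G l) (snd (P l)) < x_at (E m) (snd (P l))"
    using x_at_G_P[OF l] x_at_E_finish[OF l] by simp_all
  then have "x_at (G m) (snd (P m)) < x_at (G l) (snd (P m))"
    and "x_at (G l) (snd (P m)) < x_at (E m) (snd (P m))"
    using G_G_order[of m l m "snd (P l)" "snd (P m)"] G_E_order[of l m "snd (P l)" "snd (P m)"]
      assms False U_below_P[of l]
    by simp_all
  then show ?thesis by simp
qed

lemma level_below_P: obtains t where "snd U < t" "\<And>i. i < 3 \<Longrightarrow> t < snd (P i)"
proof
  have "snd U < snd (P 0)" "snd U < snd (P 1)" "snd U < snd (P 2)"
    using U_below_P by simp_all
  then show "snd U < (snd U + min (snd (P 0)) (min (snd (P 1)) (snd (P 2)))) / 2"
    by simp
  fix i :: nat assume "i < 3"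
  then have "i = 0 \<or> i = 1 \<or> i = 2" by auto
  then show "(snd U + min (snd (P 0)) (min (snd (P 1)) (snd (P 2)))) / 2 < snd (P i)"
    using \<open>snd U < snd (P 0)\<close> \<open>snd U < snd (P 1)\<close> \<open>snd U < snd (P 2)\<close> by auto
qed

text \<open>Just above \<open>U\<close> the curves are ordered \<open>E l, E m, E r\<close>. If \<open>G m\<close> started left of
  \<open>U\<close>, it would stay left of \<open>E m\<close> and miss \<open>P m\<close>; starting right of \<open>U\<close> is the mirror
  image.\<close>
theorem some_G_not_spanning: "\<exists>i<3. \<not> spans i"
proof (rule ccontr)
  assume "\<not> ?thesis"
  then have all_span: "\<And>i. i < 3 \<Longrightarrow> spans i"
    by blast
  obtain t where t: "snd U < t" "\<And>i. i < 3 \<Longrightarrow> t < snd (P i)"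
    using level_below_P by blast
  have distinct: "x_at (E i) t \<noteq> x_at (E j) t" if "i < 3" "j < 3" "i \<noteq> j" for i j
    using E_x_at_distinct[OF that t(1)] t(2)[OF that(1)] t(2)[OF that(2)] by simp
  obtain l m r where lmr: "l < 3" "m < 3" "r < 3" "l \<noteq> m" "r \<noteq> m"
    and order: "x_at (E l) t < x_at (E m) t" "x_at (E m) t < x_at (E r) t"
    by (rule median_of_three[OF distinct])
  have "snd U \<in> heights (G m)"
    using G_heights[OF all_span[OF lmr(2)] lmr(2)] U_below_P[OF lmr(2)] by auto
  then have "(x_at (G m) (snd U), snd U) \<in> path_image (G m)"
    using x_at_path_image G_mono lmr(2) by blast
  then have "x_at (G m) (snd U) \<noteq> fst U"
    using U_notin_G[OF lmr(2)] by (cases U) auto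
  then consider "x_at (G m) (snd U) < fst U" | "fst U < x_at (G m) (snd U)"
    by linarith
  then have "x_at (G m) (snd (P m)) \<noteq> x_at (E m) (snd (P m))"
  proof cases
    case 1
    then have "x_at (G m) t < x_at (E l) t"
      using G_side_of_U[of m l t] lmr t all_span by simp
    then show ?thesis
      using G_left_of_E_at_end[OF lmr(1,2,4) all_span[OF lmr(1)] all_span[OF lmr(2)] t(1)
          t(2)[OF lmr(1)] t(2)[OF lmr(2)] _ order(1)]
      by simp
  next
    case 2
    interpret reflected: tripod "\<lambda>i. mirror \<circ> E i" "\<lambda>i. mirror \<circ> G i" "mirror U" "\<lambda>i. mirror (P i)"
      by (rule mirror_tripod)
    have "x_at (mirror \<circ> G m) t < x_at (mirror \<circ> E r) t"
      using 2 reflected.G_side_of_U[of m r t] lmr t all_span spans_mirror by simp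
    then show ?thesis
      using reflected.G_left_of_E_at_end[OF lmr(3,2,5), of t] lmr t order all_span spans_mirror
      by simp
  qed
  then show False
    using x_at_G_P x_at_E_finish lmr(2) by simp
qed

end

section \<open>Drawings of span at most \<open>s\<close>\<close>

definition walk_edges :: "(nat \<Rightarrow> 'a) \<Rightarrow> nat \<Rightarrow> ('a \<times> 'a) set" where
  "walk_edges f k = (\<lambda>j. (f j, f (Suc j))) ` {..<k}"

lemma walk_edges_Suc: "walk_edges f (Suc k) = insert (f k, f (Suc k)) (walk_edges f k)"
  by (simp add: walk_edges_def lessThan_Suc)

lemma Field_walk_edges: "Field (walk_edges f k) \<subseteq> f ` {..k}"
  by (force simp: walk_edges_def Field_def)

lemma drawing_edge:
  assumes "upward_layered_drawing V E x y c" "e \<in> E"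
  shows "y_monotone_path (c e)" "pathstart (c e) = vpos x y (fst e)"
    "pathfinish (c e) = vpos x y (snd e)"
  using assms unfolding upward_layered_drawing_def y_monotone_path_def strict_mono_on_def
  by auto

lemma drawing_edge_rises:
  assumes "upward_layered_drawing V E x y c" "(a, b) \<in> E"
  shows "y a < y b"
proof -
  have "strict_mono_on {0..1} (\<lambda>t. snd (c (a, b) t))"
    using drawing_edge(1)[OF assms] unfolding y_monotone_path_def by simp
  then have "snd (pathstart (c (a, b))) < snd (pathfinish (c (a, b)))"
    unfolding pathstart_def pathfinish_def by (rule strict_mono_onD) auto
  then show ?thesis
    using drawing_edge(2,3)[OF assms] by (simp add: vpos_def)
qed

lemma drawing_walk_rises:
  assumes "upward_layered_drawing V E x y c" "walk_edges f k \<subseteq> E" "i \<le> j" "j \<le> k"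
  shows "y (f i) + int (j - i) \<le> y (f j)"
  using assms(3,4)
proof (induction j)
  case (Suc j)
  show ?case
  proof (cases "i = Suc j")
    case False
    then have "y (f i) + int (j - i) \<le> y (f j)"
      using Suc by simp
    moreover have "y (f j) < y (f (Suc j))"
      using assms(2) Suc.prems
      by (auto simp: walk_edges_def image_subset_iff intro!: drawing_edge_rises[OF assms(1)])
    ultimately show ?thesis
      using False Suc.prems by (simp add: Suc_diff_le)
  qed simp
qed simp

lemma drawing_vertex_on_edge:
  assumes "upward_layered_drawing V E x y c" "e \<in> E" "w \<in> V" "vpos x y w \<in> path_image (c e)"
  shows "w = fst e \<or> w = snd e"
  using assms unfolding upward_layered_drawing_def by blast

lemma drawing_edges_meet:
  assumes "upward_layered_drawing V E x y c" "F \<subseteq> E" "F' \<subseteq> E" "F \<inter> F' = {}"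
  shows "(\<Union>e\<in>F. path_image (c e)) \<inter> (\<Union>e\<in>F'. path_image (c e)) \<subseteq> vpos x y ` (Field F \<inter> Field F')"
proof
  fix p assume "p \<in> (\<Union>e\<in>F. path_image (c e)) \<inter> (\<Union>e\<in>F'. path_image (c e))"
  then obtain e e' where e: "e \<in> F" "e' \<in> F'" "p \<in> path_image (c e) \<inter> path_image (c e')"
    by blast
  then have "e \<noteq> e'"
    using assms(4) by blast
  then have "p \<in> vpos x y ` ({fst e, snd e} \<inter> {fst e', snd e'})"
    using assms(1-3) e unfolding upward_layered_drawing_def by blast
  moreover have "{fst d, snd d} \<subseteq> Field D" if "d \<in> D" for d and D :: "('a \<times> 'a) set"
    using that by (cases d) (auto intro: FieldI1 FieldI2)
  ultimately show "p \<in> vpos x y ` (Field F \<inter> Field F')"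
    using e(1,2) by blast
qed

lemma drawing_edges_disjoint:
  assumes "upward_layered_drawing V E x y c" "F \<subseteq> E" "F' \<subseteq> E" "Field F \<inter> Field F' = {}"
  shows "(\<Union>e\<in>F. path_image (c e)) \<inter> (\<Union>e\<in>F'. path_image (c e)) = {}"
proof -
  have "F \<inter> F' = {}"
    using assms(4) by (auto intro: FieldI1)
  then show ?thesis
    using drawing_edges_meet[OF assms(1-3)] assms(4) by blast
qed

lemma drawing_walk_curve:
  assumes "upward_layered_drawing V E x y c" "walk_edges f k \<subseteq> E" "1 \<le> k"
  obtains g where "y_monotone_path g" "pathstart g = vpos x y (f 0)" "pathfinish g = vpos x y (f k)"
    "path_image g = (\<Union>e\<in>walk_edges f k. path_image (c e))"
  using assms(2,3)
proof (induction k arbitrary: thesis)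
  case (Suc k)
  have edge: "(f k, f (Suc k)) \<in> E"
    using Suc.prems(2) by (simp add: walk_edges_Suc)
  show ?case
  proof (cases "k = 0")
    case True
    then show ?thesis
      using Suc.prems(1)[of "c (f 0, f 1)"] drawing_edge[OF assms(1) edge]
      by (simp add: walk_edges_def lessThan_Suc)
  next
    case False
    obtain g where g: "y_monotone_path g" "pathstart g = vpos x y (f 0)" "pathfinish g = vpos x y (f k)"
      "path_image g = (\<Union>e\<in>walk_edges f k. path_image (c e))"
      using Suc.IH Suc.prems(2) False by (auto simp: walk_edges_Suc)
    show ?thesis
    proof (rule Suc.prems(1))
      show "y_monotone_path (g +++ c (f k, f (Suc k)))"
        using y_monotone_path_join g drawing_edge[OF assms(1) edge] by simp
      show "pathstart (g +++ c (f k, f (Suc k))) = vpos x y (f 0)"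
        "pathfinish (g +++ c (f k, f (Suc k))) = vpos x y (f (Suc k))"
        using g drawing_edge[OF assms(1) edge] by simp_all
      show "path_image (g +++ c (f k, f (Suc k))) = (\<Union>e\<in>walk_edges f (Suc k). path_image (c e))"
        using g drawing_edge[OF assms(1) edge] by (simp add: path_image_join walk_edges_Suc Un_commute)
    qed
  qed
qed simp

lemma edge_span_le_drawing_span:
  assumes "finite E" "(a, b) \<in> E"
  shows "y b - y a \<le> int (drawing_span E y)"
proof -
  have "nat (y b - y a) \<in> insert 0 ((\<lambda>(u, v). nat (y v - y u)) ` E)"
    using assms(2) by (auto intro!: rev_image_eqI[of "(a, b)"])
  then have "nat (y b - y a) \<le> drawing_span E y"
    unfolding drawing_span_def using assms(1) by (intro Max_ge) auto
  then show ?thesis by linarith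
qed

lemma dag_span_attained:
  assumes "upward_planar V E"
  obtains x y c where "upward_layered_drawing V E x y c" "drawing_span E y = dag_span V E"
proof -
  let ?spans = "\<lambda>k. \<exists>x y c. upward_layered_drawing V E x y c \<and> drawing_span E y = k"
  obtain x y c where "upward_layered_drawing V E x y c"
    using assms unfolding upward_planar_def by blast
  then have "?spans (drawing_span E y)" by blast
  then have "?spans (dag_span V E)"
    unfolding dag_span_def by (rule LeastI)
  then show ?thesis
    using that by blast
qed

locale three_columns_drawing =
  fixes V :: "'a set" and E x y c and u :: 'a and col :: "nat \<Rightarrow> nat \<Rightarrow> 'a" and s :: nat
  assumes drawing: "upward_layered_drawing V E x y c" and u_vertex: "u \<in> V"
    and fan: "\<And>i. i < 3 \<Longrightarrow> (u, col i s) \<in> E"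
    and columns: "\<And>i. i < 3 \<Longrightarrow> walk_edges (col i) (2 * s) \<subseteq> E"
    and u_off_columns: "\<And>i j. i < 3 \<Longrightarrow> j \<le> 2 * s \<Longrightarrow> col i j \<noteq> u"
    and columns_disjoint: "\<And>i i' j j'. i < 3 \<Longrightarrow> i' < 3 \<Longrightarrow> i \<noteq> i' \<Longrightarrow> j \<le> 2 * s \<Longrightarrow> j' \<le> 2 * s
      \<Longrightarrow> col i j \<noteq> col i' j'"
begin

lemma Field_column: "Field (walk_edges (col i) (2 * s)) \<subseteq> col i ` {..2 * s}"
  by (rule Field_walk_edges)

lemma column_images_meet_fan:
  assumes "i < 3" "j < 3"
  shows "(\<Union>e\<in>walk_edges (col i) (2 * s). path_image (c e)) \<inter> path_image (c (u, col j s))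
    \<subseteq> vpos x y ` (col i ` {..2 * s} \<inter> {col j s})"
proof -
  have "u \<notin> col i ` {..2 * s}"
    using u_off_columns[OF assms(1)] by auto
  then have "Field (walk_edges (col i) (2 * s)) \<inter> Field {(u, col j s)} \<subseteq> col i ` {..2 * s} \<inter> {col j s}"
    and "walk_edges (col i) (2 * s) \<inter> {(u, col j s)} = {}"
    using Field_column[of i] by (auto simp: Field_insert intro: FieldI1)
  then show ?thesis
    using drawing_edges_meet[OF drawing columns[OF assms(1)], of "{(u, col j s)}"] fan[OF assms(2)]
    by blast
qed

lemma tripod_of_columns:
  assumes "1 \<le> s" and curve_G: "\<And>i. i < 3 \<Longrightarrow> y_monotone_path (G i)"
    and image_G: "\<And>i. i < 3 \<Longrightarrow> path_image (G i) = (\<Union>e\<in>walk_edges (col i) (2 * s). path_image (c e))"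
  shows "tripod (\<lambda>i. c (u, col i s)) G (vpos x y u) (\<lambda>i. vpos x y (col i s))"
proof
  fix i j :: nat
  assume i: "i < 3"
  show "y_monotone_path (c (u, col i s))" "pathstart (c (u, col i s)) = vpos x y u"
    "pathfinish (c (u, col i s)) = vpos x y (col i s)"
    using drawing_edge[OF drawing fan[OF i]] by simp_all
  show "y_monotone_path (G i)"
    using curve_G[OF i] .
  show "snd (vpos x y u) < snd (vpos x y (col i s))"
    using drawing_edge_rises[OF drawing fan[OF i]] by (simp add: vpos_def)
  show "vpos x y (col i s) \<in> path_image (G i)"
  proof -
    have e: "(col i s, col i (Suc s)) \<in> walk_edges (col i) (2 * s)"
      using \<open>1 \<le> s\<close> by (auto simp: walk_edges_def)
    then have "pathstart (c (col i s, col i (Suc s))) = vpos x y (col i s)"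
      using drawing_edge(2)[OF drawing] columns[OF i] by auto
    then have "vpos x y (col i s) \<in> path_image (c (col i s, col i (Suc s)))"
      using pathstart_in_path_image by metis
    then show ?thesis
      using image_G[OF i] e by blast
  qed
  show "path_image (G i) \<inter> path_image (c (u, col i s)) \<subseteq> {vpos x y (col i s)}"
    using column_images_meet_fan[OF i i] image_G[OF i] by auto
  show "vpos x y u \<notin> path_image (G i)"
  proof
    assume "vpos x y u \<in> path_image (G i)"
    then obtain e where e: "e \<in> walk_edges (col i) (2 * s)" "vpos x y u \<in> path_image (c e)"
      using image_G[OF i] by blast
    then have "u \<in> Field (walk_edges (col i) (2 * s))"
      using drawing_vertex_on_edge[OF drawing _ u_vertex] columns[OF i]
      by (cases e) (fastforce intro: FieldI1 FieldI2)
    then show False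
      using Field_column[of i] u_off_columns[OF i] by blast
  qed
  assume j: "j < 3" "i \<noteq> j"
  have columns_apart: "col i ` {..2 * s} \<inter> col j ` {..2 * s} = {}"
  proof (rule equals0I)
    fix v assume "v \<in> col i ` {..2 * s} \<inter> col j ` {..2 * s}"
    then obtain k k' where "k \<le> 2 * s" "k' \<le> 2 * s" "col i k = col j k'"
      by auto
    then show False
      using columns_disjoint[OF i j(1,2), of k k'] by simp
  qed
  have "col j s \<in> col j ` {..2 * s}"
    by simp
  then have "col j s \<notin> col i ` {..2 * s}"
    using columns_apart by (metis IntI empty_iff)
  then have "col i ` {..2 * s} \<inter> {col j s} = {}"
    by simp
  then have "path_image (G i) \<inter> path_image (c (u, col j s)) \<subseteq> {}"
    using column_images_meet_fan[OF i j(1)] image_G[OF i] by simp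
  then show "path_image (G i) \<inter> path_image (c (u, col j s)) = {}"
    by blast
  have "Field (walk_edges (col i) (2 * s)) \<inter> Field (walk_edges (col j) (2 * s)) = {}"
    using Int_mono[OF Field_column[of i] Field_column[of j]] columns_apart by (metis subset_empty)
  then show "path_image (G i) \<inter> path_image (G j) = {}"
    using drawing_edges_disjoint[OF drawing columns[OF i] columns[OF j(1)]]
    by (simp only: image_G[OF i] image_G[OF j(1)])
  have "Field {(u, col i s)} \<inter> Field {(u, col j s)} \<subseteq> {u}"
    and "{(u, col i s)} \<inter> {(u, col j s)} = {}"
    using columns_disjoint[OF i j(1,2), of s s] by (auto simp: Field_insert)
  then show "path_image (c (u, col i s)) \<inter> path_image (c (u, col j s)) \<subseteq> {vpos x y u}"
    using drawing_edges_meet[OF drawing, of "{(u, col i s)}" "{(u, col j s)}"] fan[OF i] fan[OF j(1)]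
    by fastforce
qed

lemma some_column_short: "\<exists>i<3. y u < y (col i 0) \<or> (\<exists>j<3. y (col i (2 * s)) < y (col j s))"
proof (cases "s = 0")
  case True
  then show ?thesis
    using drawing_edge_rises[OF drawing fan[of 0]] by (intro exI[of _ 0]) simp
next
  case False
  then have "1 \<le> 2 * s"
    by simp
  have "\<exists>g. i < 3 \<longrightarrow> y_monotone_path g \<and> pathstart g = vpos x y (col i 0) \<and>
      pathfinish g = vpos x y (col i (2 * s)) \<and>
      path_image g = (\<Union>e\<in>walk_edges (col i) (2 * s). path_image (c e))" for i
  proof (cases "i < 3")
    case True
    obtain g where "y_monotone_path g" "pathstart g = vpos x y (col i 0)"
      "pathfinish g = vpos x y (col i (2 * s))"
      "path_image g = (\<Union>e\<in>walk_edges (col i) (2 * s). path_image (c e))"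
      by (rule drawing_walk_curve[OF drawing columns[OF True] \<open>1 \<le> 2 * s\<close>])
    then show ?thesis
      by blast
  qed simp
  then obtain G where curve_G: "\<And>i. i < 3 \<Longrightarrow> y_monotone_path (G i)"
    and start_G: "\<And>i. i < 3 \<Longrightarrow> pathstart (G i) = vpos x y (col i 0)"
    and finish_G: "\<And>i. i < 3 \<Longrightarrow> pathfinish (G i) = vpos x y (col i (2 * s))"
    and image_G: "\<And>i. i < 3 \<Longrightarrow> path_image (G i) = (\<Union>e\<in>walk_edges (col i) (2 * s). path_image (c e))"
    by metis
  interpret tripod "\<lambda>i. c (u, col i s)" G "vpos x y u" "\<lambda>i. vpos x y (col i s)"
    using tripod_of_columns curve_G image_G False by simp
  show ?thesis
    using some_G_not_spanning start_G finish_G unfolding spans_def by (auto simp: vpos_def not_le)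
qed

text \<open>In a drawing of span at most \<open>s\<close> every column rises by at least \<open>s\<close> on either side of
  its midpoint, and so reaches from the height of \<open>u\<close> to above all three midpoints.\<close>
theorem span_gt:
  assumes "finite E"
  shows "s < drawing_span E y"
proof (rule ccontr)
  assume "\<not> s < drawing_span E y"
  then have short: "y b \<le> y a + int s" if "(a, b) \<in> E" for a b
    using edge_span_le_drawing_span[OF \<open>finite E\<close> that, of y] by linarith
  have "y (col i 0) \<le> y u" "y (col j s) < y (col i (2 * s))" if "i < 3" "j < 3" for i j
    using drawing_walk_rises[OF drawing columns[OF that(1)], of s "2 * s"]
      drawing_walk_rises[OF drawing columns[OF that(1)], of 0 s]
      drawing_edge_rises[OF drawing fan[OF that(1)]] short[OF fan[OF that(1)]] short[OF fan[OF that(2)]]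
    by simp_all
  then show False
    using some_column_short by (meson not_le less_imp_le)
qed

end

section \<open>Trees given by parent pointers\<close>

lemma relpow_potential_rises:
  fixes f :: "'a \<Rightarrow> int"
  assumes rises: "\<And>a b. (a, b) \<in> R \<Longrightarrow> f a < f b" and "(a, b) \<in> R ^^ k"
  shows "f a + int k \<le> f b"
  using assms(2)
proof (induction k arbitrary: b)
  case (Suc k)
  then obtain z where "(a, z) \<in> R ^^ k" "(z, b) \<in> R"
    by auto
  then show ?case
    using Suc.IH rises by fastforce
qed simp

lemma acyclic_if_potential_rises:
  fixes f :: "'a \<Rightarrow> int"
  assumes "\<And>a b. (a, b) \<in> R \<Longrightarrow> f a < f b"
  shows "acyclic R"
  unfolding acyclic_def
proof
  fix a
  show "(a, a) \<notin> R\<^sup>+"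
  proof
    assume "(a, a) \<in> R\<^sup>+"
    then obtain k where "0 < k" "(a, a) \<in> R ^^ k"
      using trancl_power by blast
    then show False
      using relpow_potential_rises[OF assms] by fastforce
  qed
qed

locale parent_arcs =
  fixes parent :: "nat \<Rightarrow> nat" and arc :: "nat \<Rightarrow> nat \<times> nat"
  assumes parent_less: "\<And>w. 0 < w \<Longrightarrow> parent w < w"
    and arc: "\<And>w. arc w = (parent w, w) \<or> arc w = (w, parent w)"
begin

lemma inj_on_arc: "inj_on arc {1..<n}"
proof (rule inj_onI)
  have arc_max: "max (fst (arc w)) (snd (arc w)) = w" if "0 < w" for w
    using arc[of w] parent_less[OF that] by auto
  fix w w' assume "w \<in> {1..<n}" "w' \<in> {1..<n}" "arc w = arc w'"
  then have "w = max (fst (arc w')) (snd (arc w'))"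
    using arc_max[of w] by simp
  also have "\<dots> = w'"
    using arc_max[of w'] \<open>w' \<in> {1..<n}\<close> by simp
  finally show "w = w'" .
qed

lemma reaches_root:
  assumes "w < n"
  shows "(w, 0) \<in> (arc ` {1..<n} \<union> (arc ` {1..<n})\<inverse>)\<^sup>*"
  using assms
proof (induction w rule: less_induct)
  case (less w)
  show ?case
  proof (cases "w = 0")
    case False
    then have "arc w \<in> arc ` {1..<n}"
      using less.prems by simp
    then have "(w, parent w) \<in> arc ` {1..<n} \<union> (arc ` {1..<n})\<inverse>"
      using arc[of w] by auto
    moreover have "(parent w, 0) \<in> (arc ` {1..<n} \<union> (arc ` {1..<n})\<inverse>)\<^sup>*"
      using less.IH[of "parent w"] parent_less[of w] False less.prems by simp
    ultimately show ?thesis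
      by (rule converse_rtrancl_into_rtrancl)
  qed simp
qed

theorem directed_tree:
  assumes "acyclic (arc ` {1..<n})" and "0 < n"
  shows "directed_tree {0..<n} (arc ` {1..<n})"
proof -
  let ?E = "arc ` {1..<n}"
  have "?E \<subseteq> {0..<n} \<times> {0..<n}"
  proof
    fix e assume "e \<in> ?E"
    then obtain w where "w \<in> {1..<n}" "e = arc w"
      by blast
    then show "e \<in> {0..<n} \<times> {0..<n}"
      using arc[of w] parent_less[of w] by auto
  qed
  moreover have "(v, u) \<notin> ?E" if "(u, v) \<in> ?E" for u v
  proof
    assume "(v, u) \<in> ?E"
    then have "(u, u) \<in> ?E\<^sup>+"
      using trancl_into_trancl[OF r_into_trancl[OF that]] by blast
    then show False
      using assms(1) unfolding acyclic_def by blast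
  qed
  moreover have "sym ((?E \<union> ?E\<inverse>)\<^sup>*)"
    by (intro sym_rtrancl) (auto simp: sym_def)
  then have "(u, v) \<in> (?E \<union> ?E\<inverse>)\<^sup>*" if "u < n" "v < n" for u v
    using reaches_root[OF that(1)] reaches_root[OF that(2)] by (meson rtrancl_trans symD)
  moreover have "card ?E + 1 = n"
    using card_image[OF inj_on_arc] assms(2) by simp
  ultimately show ?thesis
    unfolding directed_tree_def using assms by (intro conjI allI impI ballI) auto
qed

lemma degree_le: "degree (arc ` {1..<n}) v \<le> card {w \<in> {1..<n}. w = v \<or> parent w = v}"
proof -
  let ?S = "{w \<in> {1..<n}. w = v \<or> parent w = v}"
  have "{e \<in> arc ` {1..<n}. fst e = v \<or> snd e = v} \<subseteq> arc ` ?S"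
  proof
    fix e assume "e \<in> {e \<in> arc ` {1..<n}. fst e = v \<or> snd e = v}"
    then obtain w where "w \<in> {1..<n}" "e = arc w" "fst e = v \<or> snd e = v"
      by blast
    moreover from this have "w = v \<or> parent w = v"
      using arc[of w] by auto
    ultimately show "e \<in> arc ` ?S"
      by blast
  qed
  then have "degree (arc ` {1..<n}) v \<le> card (arc ` ?S)"
    unfolding degree_def by (intro card_mono) auto
  also have "\<dots> \<le> card ?S"
    by (rule card_image_le) simp
  finally show ?thesis .
qed

end

text \<open>Vertex \<open>0\<close> is the root and vertex \<open>i + 1\<close> (\<open>i < 3\<close>) the midpoint of column \<open>i\<close>.
  The vertex \<open>col_vertex s i j\<close> of column \<open>i\<close> (\<open>j \<le> 2 s\<close>, counted from the bottom)
  at distance \<open>d = |j - s| \<ge> 1\<close> from the midpoint is \<open>6 (d - 1) + 2 i + 4\<close> below it and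
  one more above it. The vertices from \<open>6 s + 4\<close> on form a zig-zag path hanging from the top
  \<open>6 s + 3\<close> of column \<open>2\<close>.\<close>

definition col_vertex :: "nat \<Rightarrow> nat \<Rightarrow> nat \<Rightarrow> nat" where
  "col_vertex s i j = (if j < s then 6 * (s - j - 1) + 2 * i + 4 else if j = s then i + 1
     else 6 * (j - s - 1) + 2 * i + 5)"

definition col_index :: "nat \<Rightarrow> nat" where
  "col_index w = (if w \<le> 3 then w - 1 else (w - 4) mod 6 div 2)"

definition col_offset :: "nat \<Rightarrow> int" where
  "col_offset w = (if w \<le> 3 then 0 else if odd w then int ((w - 4) div 6 + 1)
     else - int ((w - 4) div 6 + 1))"

definition tree_parent :: "nat \<Rightarrow> nat \<Rightarrow> nat" where
  "tree_parent s w = (if w \<le> 3 then 0 else if w < 10 \<and> w < 6 * s + 4 then (w - 4) div 2 + 1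
     else if w < 6 * s + 4 then w - 6 else w - 1)"

text \<open>The drawing: the root at the origin, column \<open>i\<close> on the line \<open>x = i + 1\<close> at heights
  \<open>2 s + 3, \<dots>, 4 s + 3\<close>, and the zig-zag path at heights \<open>4 s + 2\<close> and \<open>4 s + 3\<close> to
  the right of \<open>x = 3\<close>.\<close>
definition xpos :: "nat \<Rightarrow> nat \<Rightarrow> real" where
  "xpos s w = (if w = 0 then 0 else if w < 6 * s + 4 then real (col_index w + 1)
     else real w - 6 * real s)"

definition ypos :: "nat \<Rightarrow> nat \<Rightarrow> int" where
  "ypos s w = (if w = 0 then 0 else if w < 6 * s + 4 then 3 * int s + 3 + col_offset w
     else 4 * int s + 2 + (if odd w then 1 else 0))"

lemma col_vertex_range:
  assumes "i < 3" "j \<le> 2 * s"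
  shows "1 \<le> col_vertex s i j" "col_vertex s i j < 6 * s + 4"
  using assms unfolding col_vertex_def by auto

lemma column_vertex_cases:
  assumes "1 \<le> w" "w < 6 * s + 4"
  obtains i j where "i < 3" "j \<le> 2 * s" "w = col_vertex s i j"
proof (cases "w \<le> 3")
  case True
  then show ?thesis
    using that[of "w - 1" s] assms by (simp add: col_vertex_def)
next
  case False
  define q where "q = (w - 4) div 6"
  define r where "r = (w - 4) mod 6"
  have w: "w = 6 * q + r + 4" "r < 6" "q < s"
    using False assms unfolding q_def r_def by auto
  show ?thesis
  proof (cases "even r")
    case True
    then have "r = 2 * (r div 2)" "r div 2 < 3"
      using w(2) by auto
    then show ?thesis
      using that[of "r div 2" "s - q - 1"] w by (simp add: col_vertex_def)
  next
    case False
    then have "r = 2 * (r div 2) + 1" "r div 2 < 3"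
      using w(2) by presburger+
    then show ?thesis
      using that[of "r div 2" "s + q + 1"] w by (simp add: col_vertex_def)
  qed
qed

lemma tree_vertex_cases:
  obtains (root) "w = 0" | (column) i j where "i < 3" "j \<le> 2 * s" "w = col_vertex s i j"
    | (chain) "6 * s + 4 \<le> w"
proof -
  consider "w = 0" | "1 \<le> w" "w < 6 * s + 4" | "6 * s + 4 \<le> w"
    by linarith
  then show ?thesis
  proof cases
    case 1
    then show ?thesis by (rule root)
  next
    case 2
    then obtain i j where "i < 3" "j \<le> 2 * s" "w = col_vertex s i j"
      using column_vertex_cases[of w s] by blast
    then show ?thesis by (rule column)
  next
    case 3
    then show ?thesis by (rule chain)
  qed
qed

lemma col_vertex_pos:
  assumes "i < 3" "j \<le> 2 * s"
  shows "xpos s (col_vertex s i j) = real i + 1" "ypos s (col_vertex s i j) = 2 * int s + 3 + int j"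
proof -
  have "col_index (col_vertex s i j) = i \<and> col_offset (col_vertex s i j) = int j - int s"
    using assms by (auto simp: col_vertex_def col_index_def col_offset_def)
  then show "xpos s (col_vertex s i j) = real i + 1" "ypos s (col_vertex s i j) = 2 * int s + 3 + int j"
    using col_vertex_range[OF assms] by (simp_all add: xpos_def ypos_def)
qed

lemma col_vertex_eq_iff:
  assumes "i < 3" "j \<le> 2 * s" "i' < 3" "j' \<le> 2 * s"
  shows "col_vertex s i j = col_vertex s i' j' \<longleftrightarrow> i = i' \<and> j = j'"
proof
  assume eq: "col_vertex s i j = col_vertex s i' j'"
  have "real i + 1 = real i' + 1" "2 * int s + 3 + int j = 2 * int s + 3 + int j'"
    using col_vertex_pos[OF assms(1,2)] col_vertex_pos[OF assms(3,4)] eq by metis+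
  then show "i = i' \<and> j = j'"
    by simp
qed simp

lemma col_vertex_top: "col_vertex s 2 (2 * s) = 6 * s + 3"
  by (cases s) (simp_all add: col_vertex_def)

lemma col_vertex_parent:
  assumes "i < 3"
  shows "j < s \<Longrightarrow> tree_parent s (col_vertex s i j) = col_vertex s i (Suc j)"
    and "s \<le> j \<Longrightarrow> j < 2 * s \<Longrightarrow> tree_parent s (col_vertex s i (Suc j)) = col_vertex s i j"
  using assms by (auto simp: col_vertex_def tree_parent_def)

definition tree_arc :: "nat \<Rightarrow> nat \<Rightarrow> nat \<times> nat" where
  "tree_arc s w = (if ypos s (tree_parent s w) < ypos s w then (tree_parent s w, w)
    else (w, tree_parent s w))"

definition tree_arcs :: "nat \<Rightarrow> nat \<Rightarrow> (nat \<times> nat) set" where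
  "tree_arcs s n = tree_arc s ` {1..<n}"

lemma tree_parent_less: "0 < w \<Longrightarrow> tree_parent s w < w"
  by (auto simp: tree_parent_def)

lemma tree_parent_pos: "4 \<le> w \<Longrightarrow> 0 < tree_parent s w"
  by (auto simp: tree_parent_def)

lemma root_pos [simp]: "xpos s 0 = 0" "ypos s 0 = 0"
  by (simp_all add: xpos_def ypos_def)

lemma fan_vertex_pos:
  assumes "1 \<le> w" "w \<le> 3"
  shows "xpos s w = real w" "ypos s w = 3 * int s + 3"
  using col_vertex_pos[of "w - 1" s s] assms by (simp_all add: col_vertex_def)

lemma chain_vertex_pos:
  assumes "6 * s + 4 \<le> w"
  shows "xpos s w = real w - 6 * real s" "ypos s w = 4 * int s + 2 + (if odd w then 1 else 0)"
    "xpos s (w - 1) = real w - 6 * real s - 1"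
      "ypos s (w - 1) = 4 * int s + 2 + (if odd w then 0 else 1)"
proof -
  show "xpos s w = real w - 6 * real s" "ypos s w = 4 * int s + 2 + (if odd w then 1 else 0)"
    using assms by (simp_all add: xpos_def ypos_def)
  have "xpos s (w - 1) = real w - 6 * real s - 1 \<and>
    ypos s (w - 1) = 4 * int s + 2 + (if odd w then 0 else 1)"
  proof (cases "w = 6 * s + 4")
    case True
    then have "w - 1 = col_vertex s 2 (2 * s)"
      using col_vertex_top by simp
    then show ?thesis
      using col_vertex_pos[of 2 "2 * s" s] True by simp
  next
    case False
    then have "6 * s + 4 \<le> w - 1" "odd (w - 1) \<longleftrightarrow> even w"
      using assms by auto
    then show ?thesis
      using assms unfolding xpos_def ypos_def by (auto simp: of_nat_diff)
  qed
  then show "xpos s (w - 1) = real w - 6 * real s - 1"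
    "ypos s (w - 1) = 4 * int s + 2 + (if odd w then 0 else 1)"
    by simp_all
qed

lemma column_arc:
  assumes "3 < w" "w < 6 * s + 4"
  obtains i j where "i < 3" "j < 2 * s"
    "{tree_parent s w, w} = {col_vertex s i j, col_vertex s i (Suc j)}"
proof -
  have "1 \<le> w"
    using assms(1) by simp
  then obtain i j where ij: "i < 3" "j \<le> 2 * s" "w = col_vertex s i j"
    using column_vertex_cases assms(2) by blast
  have "j \<noteq> s"
    using assms(1) ij by (auto simp: col_vertex_def)
  then consider "j < s" | "s < j"
    by linarith
  then show ?thesis
  proof cases
    case 1
    then show ?thesis
      using that[of i j] col_vertex_parent(1)[OF ij(1) 1] ij by (simp add: insert_commute)
  next
    case 2
    then have "tree_parent s (col_vertex s i (Suc (j - 1))) = col_vertex s i (j - 1)"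
      using col_vertex_parent(2)[OF ij(1), where j = "j - 1"] ij by simp
    then show ?thesis
      using that[of i "j - 1"] ij 2 by simp
  qed
qed

lemma tree_arc_cases:
  assumes "1 \<le> w"
  obtains (fan) "w \<le> 3" "tree_parent s w = 0"
    | (column) i j where "3 < w" "w < 6 * s + 4" "i < 3" "j < 2 * s"
        "{tree_parent s w, w} = {col_vertex s i j, col_vertex s i (Suc j)}"
    | (chain) "6 * s + 4 \<le> w" "tree_parent s w = w - 1"
proof -
  consider "w \<le> 3" | "3 < w" "w < 6 * s + 4" | "6 * s + 4 \<le> w"
    by linarith
  then show ?thesis
  proof cases
    case 1
    then show ?thesis using fan by (simp add: tree_parent_def)
  next
    case 2
    then show ?thesis using column column_arc by metis
  next
    case 3
    then show ?thesis using chain by (simp add: tree_parent_def)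
  qed
qed

lemma ypos_parent_ne:
  assumes "1 \<le> w"
  shows "ypos s (tree_parent s w) \<noteq> ypos s w"
  using assms
proof (cases rule: tree_arc_cases[of w s])
  case fan
  then show ?thesis using fan_vertex_pos[of w s] assms by simp
next
  case (column i j)
  have "ypos s (col_vertex s i j) \<noteq> ypos s (col_vertex s i (Suc j))"
    using col_vertex_pos(2)[of i j s] col_vertex_pos(2)[of i "Suc j" s] column(3,4) by simp
  moreover have "tree_parent s w \<noteq> w"
    using tree_parent_less[of w s] assms by simp
  ultimately show ?thesis
    using column(5) by (auto simp: doubleton_eq_iff)
next
  case chain
  then show ?thesis using chain_vertex_pos[of s w] by simp
qed

lemma tree_arc_rises:
  "1 \<le> w \<Longrightarrow> ypos s (fst (tree_arc s w)) < ypos s (snd (tree_arc s w))"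
  using ypos_parent_ne[of w s] by (auto simp: tree_arc_def)

lemma tree_arcs_column:
  assumes "i < 3" "j < 2 * s" "6 * s + 4 \<le> n"
  shows "(col_vertex s i j, col_vertex s i (Suc j)) \<in> tree_arcs s n"
proof -
  have rises: "ypos s (col_vertex s i j) < ypos s (col_vertex s i (Suc j))"
    using col_vertex_pos(2)[of i j s] col_vertex_pos(2)[of i "Suc j" s] assms by simp
  obtain w where "w \<in> {1..<n}" "tree_arc s w = (col_vertex s i j, col_vertex s i (Suc j))"
  proof (cases "j < s")
    case True
    show ?thesis
    proof (rule that[of "col_vertex s i j"])
      show "col_vertex s i j \<in> {1..<n}"
        using col_vertex_range[of i j s] assms by simp
      show "tree_arc s (col_vertex s i j) = (col_vertex s i j, col_vertex s i (Suc j))"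
        using col_vertex_parent(1)[OF assms(1) True] rises by (simp add: tree_arc_def)
    qed
  next
    case False
    show ?thesis
    proof (rule that[of "col_vertex s i (Suc j)"])
      show "col_vertex s i (Suc j) \<in> {1..<n}"
        using col_vertex_range[of i "Suc j" s] assms by simp
      show "tree_arc s (col_vertex s i (Suc j)) = (col_vertex s i j, col_vertex s i (Suc j))"
        using col_vertex_parent(2)[OF assms(1), where j = j] False assms(2) rises
        by (simp add: tree_arc_def)
    qed
  qed
  then show ?thesis
    unfolding tree_arcs_def by (metis image_eqI)
qed

lemma tree_arcs_fan:
  assumes "i < 3" "4 \<le> n"
  shows "(0, col_vertex s i s) \<in> tree_arcs s n"
proof -
  have "tree_arc s (i + 1) = (0, col_vertex s i s)"
    using assms fan_vertex_pos[of "i + 1" s] by (simp add: tree_arc_def tree_parent_def col_vertex_def)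
  then show ?thesis
    using assms unfolding tree_arcs_def by (intro rev_image_eqI[of "i + 1"]) auto
qed

lemma parent_arcs_tree: "parent_arcs (tree_parent s) (tree_arc s)"
  by unfold_locales (simp_all add: tree_parent_less tree_arc_def)

lemma directed_tree_tree_arcs:
  assumes "0 < n"
  shows "directed_tree {0..<n} (tree_arcs s n)"
  unfolding tree_arcs_def
proof (rule parent_arcs.directed_tree[OF parent_arcs_tree _ assms])
  show "acyclic (tree_arc s ` {1..<n})"
  proof (rule acyclic_if_potential_rises[of _ "ypos s"])
    fix a b assume "(a, b) \<in> tree_arc s ` {1..<n}"
    then obtain w where "1 \<le> w" "tree_arc s w = (a, b)"
      by auto
    then show "ypos s a < ypos s b"
      using tree_arc_rises[of w s] by simp
  qed
qed

lemma card_tree_children: "card {w \<in> {1..<n}. tree_parent s w = v} \<le> (if v = 0 then 3 else 2)"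
proof -
  define C where "C = (if v = 0 then {1, 2, 3}
    else if v \<le> 3 then (if s = 0 then {v + 1} else {2 * v + 2, 2 * v + 3})
    else {v + 1, v + 6})"
  have "{w \<in> {1..<n}. tree_parent s w = v} \<subseteq> C"
  proof
    fix w assume "w \<in> {w \<in> {1..<n}. tree_parent s w = v}"
    then have "1 \<le> w" "tree_parent s w = v"
      by auto
    consider "w \<le> 3" | "3 < w" "w < 10" "w < 6 * s + 4" | "10 \<le> w" "w < 6 * s + 4" | "6 * s + 4 \<le> w"
      by linarith
    then show "w \<in> C"
    proof cases
      case 1
      then show ?thesis
        using \<open>1 \<le> w\<close> \<open>tree_parent s w = v\<close> unfolding C_def tree_parent_def by auto
    next
      case 2
      then have "v = (w - 4) div 2 + 1" "s \<noteq> 0"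
        using \<open>tree_parent s w = v\<close> unfolding tree_parent_def by auto
      then show ?thesis
        using 2 unfolding C_def by auto
    next
      case 3
      then have "v = w - 6"
        using \<open>tree_parent s w = v\<close> unfolding tree_parent_def by auto
      then show ?thesis
        using 3 unfolding C_def by auto
    next
      case 4
      then have "v = w - 1"
        using \<open>tree_parent s w = v\<close> unfolding tree_parent_def by auto
      then show ?thesis
        using 4 unfolding C_def by auto
    qed
  qed
  moreover have "finite C" "card C \<le> (if v = 0 then 3 else 2)"
    unfolding C_def by (simp_all add: card_insert_if)
  ultimately show ?thesis
    by (meson card_mono order_trans)
qed

lemma degree_tree_arcs: "degree (tree_arcs s n) v \<le> 3"
proof -
  let ?S = "{w \<in> {1..<n}. w = v \<or> tree_parent s w = v}"
  let ?C = "{w \<in> {1..<n}. tree_parent s w = v}"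
  have "degree (tree_arcs s n) v \<le> card ?S"
    unfolding tree_arcs_def by (rule parent_arcs.degree_le[OF parent_arcs_tree])
  also have "card ?S \<le> 3"
  proof (cases "v = 0")
    case True
    then have "?S = ?C"
      by auto
    then show ?thesis
      using card_tree_children[of n s v] True by simp
  next
    case False
    have "card ?S \<le> card (insert v ?C)"
      by (rule card_mono) auto
    also have "\<dots> \<le> Suc (card ?C)"
      by (simp add: card_insert_le_m1 card_insert_if)
    finally show ?thesis
      using card_tree_children[of n s v] False by simp
  qed
  finally show ?thesis .
qed

text \<open>In the drawing the root lies far below its children; for counting path lengths it is
  placed just below them instead.\<close>
definition tree_rank :: "nat \<Rightarrow> nat \<Rightarrow> int" where
  "tree_rank s w = (if w = 0 then 3 * int s + 2 else ypos s w)"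

lemma tree_rank_rises:
  assumes "(a, b) \<in> tree_arcs s n"
  shows "tree_rank s a < tree_rank s b"
proof -
  obtain w where w: "1 \<le> w" "(a, b) = tree_arc s w"
    using assms unfolding tree_arcs_def by auto
  show ?thesis
  proof (cases "w \<le> 3")
    case True
    then have "(a, b) = (0, w)"
      using w by (simp add: tree_arc_def tree_parent_def fan_vertex_pos)
    then show ?thesis
      using fan_vertex_pos[of w s] w True by (simp add: tree_rank_def)
  next
    case False
    then have "a \<noteq> 0" "b \<noteq> 0"
      using w tree_parent_pos[of w s] by (auto simp: tree_arc_def split: if_splits)
    then show ?thesis
      using tree_arc_rises[OF w(1), of s] w(2)[symmetric] by (simp add: tree_rank_def)
  qed
qed

lemma tree_rank_bounds: "min (2 * int s + 3) (4 * int s + 2) \<le> tree_rank s w"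
  "tree_rank s w \<le> 4 * int s + 3"
proof -
  have "min (2 * int s + 3) (4 * int s + 2) \<le> tree_rank s w \<and> tree_rank s w \<le> 4 * int s + 3"
  proof (cases w rule: tree_vertex_cases[where s = s])
    case (column i j)
    then show ?thesis
      using col_vertex_pos(2)[of i j s] col_vertex_range[of i j s] by (simp add: tree_rank_def)
  next
    case chain
    then show ?thesis
      using chain_vertex_pos(2)[OF chain] by (simp add: tree_rank_def min_le_iff_disj)
  qed (simp add: tree_rank_def)
  then show "min (2 * int s + 3) (4 * int s + 2) \<le> tree_rank s w" "tree_rank s w \<le> 4 * int s + 3"
    by simp_all
qed

lemma tree_walk_length:
  assumes "(u, w) \<in> tree_arcs s n ^^ k"
  shows "k \<le> max (2 * s) 1"
proof -
  have "tree_rank s u + int k \<le> tree_rank s w"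
    using tree_rank_rises assms by (rule relpow_potential_rises)
  then have "int k \<le> 4 * int s + 3 - min (2 * int s + 3) (4 * int s + 2)"
    using tree_rank_bounds[of s u] tree_rank_bounds[of s w] by linarith
  then show ?thesis
    by (auto simp: min_def max_def split: if_splits)
qed

section \<open>A straight-line drawing of the tree\<close>

lemma closed_segment_coords:
  fixes a b p :: "real \<times> real"
  assumes "p \<in> closed_segment a b"
  obtains u where "0 \<le> u" "u \<le> 1"
    "fst p = fst a + u * (fst b - fst a)" "snd p = snd a + u * (snd b - snd a)"
proof -
  obtain u where u: "0 \<le> u" "u \<le> 1" "p = (1 - u) *\<^sub>R a + u *\<^sub>R b"
    using assms by (auto simp: in_segment)
  then have "fst p = (1 - u) * fst a + u * fst b" "snd p = (1 - u) * snd a + u * snd b"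
    by simp_all
  then show ?thesis
    using that[OF u(1,2)] by (simp add: algebra_simps)
qed

lemma unit_interval_Ints: "(u :: real) \<in> \<int> \<Longrightarrow> 0 \<le> u \<Longrightarrow> u \<le> 1 \<Longrightarrow> u = 0 \<or> u = 1"
  by (elim Ints_cases) auto

lemma unit_segment_endpoint:
  fixes a b p :: "real \<times> real"
  assumes p: "p \<in> closed_segment a b"
  shows "fst b = fst a + 1 \<Longrightarrow> fst a \<in> \<int> \<Longrightarrow> fst p \<in> \<int> \<Longrightarrow> p = a \<or> p = b"
    and "snd b = snd a + 1 \<Longrightarrow> snd a \<in> \<int> \<Longrightarrow> snd p \<in> \<int> \<Longrightarrow> p = a \<or> p = b"
proof -
  obtain u where u: "0 \<le> u" "u \<le> 1" "fst p = fst a + u * (fst b - fst a)"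
    "snd p = snd a + u * (snd b - snd a)"
    using closed_segment_coords[OF p] by blast
  have ends: "p = a \<or> p = b" if "u \<in> \<int>"
    using unit_interval_Ints[OF that u(1,2)] u(3,4) by (auto simp: prod_eq_iff)
  show "fst b = fst a + 1 \<Longrightarrow> fst a \<in> \<int> \<Longrightarrow> fst p \<in> \<int> \<Longrightarrow> p = a \<or> p = b"
    using ends u(3) by (metis Ints_diff add_diff_cancel_left' mult.right_neutral)
  show "snd b = snd a + 1 \<Longrightarrow> snd a \<in> \<int> \<Longrightarrow> snd p \<in> \<int> \<Longrightarrow> p = a \<or> p = b"
    using ends u(4) by (metis Ints_diff add_diff_cancel_left' mult.right_neutral)
qed

abbreviation tree_pos :: "nat \<Rightarrow> nat \<Rightarrow> real \<times> real" where
  "tree_pos s \<equiv> vpos (xpos s) (ypos s)"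

abbreviation tree_segment :: "nat \<Rightarrow> nat \<Rightarrow> (real \<times> real) set" where
  "tree_segment s w \<equiv> closed_segment (tree_pos s (tree_parent s w)) (tree_pos s w)"

lemma xpos_kinds:
  obtains (root) "w = 0" "xpos s w = 0"
    | (column) i j where "i < 3" "j \<le> 2 * s" "w = col_vertex s i j" "xpos s w = real i + 1"
    | (chain) "6 * s + 4 \<le> w" "xpos s w = real (w - 6 * s)"
proof (cases w rule: tree_vertex_cases[where s = s])
  case root
  then show ?thesis using that(1) by simp
next
  case (column i j)
  then show ?thesis using that(2) col_vertex_pos(1) by blast
next
  case chain
  then show ?thesis using that(3) chain_vertex_pos(1) by (simp add: of_nat_diff)
qed

lemma tree_pos_Ints: "fst (tree_pos s w) \<in> \<int>" "snd (tree_pos s w) \<in> \<int>"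
proof -
  have "xpos s w \<in> \<int>"
    by (cases w rule: xpos_kinds[where s = s]) simp_all
  then show "fst (tree_pos s w) \<in> \<int>" "snd (tree_pos s w) \<in> \<int>"
    by (simp_all add: vpos_def)
qed

lemma inj_tree_pos: "inj (tree_pos s)"
proof (rule injI)
  fix z z' assume "tree_pos s z = tree_pos s z'"
  then have x: "xpos s z = xpos s z'" and y: "ypos s z = ypos s z'"
    by (simp_all add: vpos_def)
  show "z = z'"
  proof (cases z rule: xpos_kinds[where s = s])
    case root
    then show ?thesis
      using x by (cases z' rule: xpos_kinds[where s = s]) simp_all
  next
    case (column i j)
    then show ?thesis
    proof (cases z' rule: xpos_kinds[where s = s])
      case (column i' j')
      then have "i = i'" "j = j'"
        using \<open>z = col_vertex s i j\<close> \<open>i < 3\<close> \<open>j \<le> 2 * s\<close> x y col_vertex_pos(2)[of i j s]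
          col_vertex_pos(2)[of i' j' s] \<open>xpos s z = real i + 1\<close> by simp_all
      then show ?thesis
        using column \<open>z = col_vertex s i j\<close> by simp
    next
      case chain
      then show ?thesis using x \<open>xpos s z = real i + 1\<close> \<open>i < 3\<close> by simp
    qed (use x in simp)
  next
    case chain
    then show ?thesis
      using x by (cases z' rule: xpos_kinds[where s = s]) simp_all
  qed
qed

lemma tree_segment_cases:
  assumes "1 \<le> w"
  obtains (fan) "w \<le> 3" "tree_pos s (tree_parent s w) = (0, 0)" "tree_pos s w = (real w, 3 * real s + 3)"
    | (column) i j where "3 < w" "w < 6 * s + 4" "i < 3" "j < 2 * s"
        "{tree_parent s w, w} = {col_vertex s i j, col_vertex s i (Suc j)}"
        "{tree_pos s (tree_parent s w), tree_pos s w} =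
          {(real i + 1, 2 * real s + 3 + real j), (real i + 1, 2 * real s + 4 + real j)}"
        "tree_segment s w = closed_segment (real i + 1, 2 * real s + 3 + real j)
          (real i + 1, 2 * real s + 4 + real j)"
    | (chain) "6 * s + 4 \<le> w" "tree_parent s w = w - 1"
        "fst (tree_pos s (w - 1)) = real w - 6 * real s - 1" "fst (tree_pos s w) = real w - 6 * real s"
  using assms
proof (cases rule: tree_arc_cases[of w s])
  case fan
  then show ?thesis
    using that(1) fan_vertex_pos[of w s] assms by (simp add: vpos_def)
next
  case (column i j)
  have "tree_pos s (col_vertex s i j) = (real i + 1, 2 * real s + 3 + real j)"
    "tree_pos s (col_vertex s i (Suc j)) = (real i + 1, 2 * real s + 4 + real j)"
    using col_vertex_pos[of i j s] col_vertex_pos[of i "Suc j" s] column(3,4)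
      by (simp_all add: vpos_def)
  then have "{tree_pos s (tree_parent s w), tree_pos s w} =
      {(real i + 1, 2 * real s + 3 + real j), (real i + 1, 2 * real s + 4 + real j)}"
    using column(5) by (auto simp: doubleton_eq_iff)
  moreover from this have "tree_segment s w =
      closed_segment (real i + 1, 2 * real s + 3 + real j) (real i + 1, 2 * real s + 4 + real j)"
    by (auto simp: doubleton_eq_iff closed_segment_commute)
  ultimately show ?thesis
    using that(2) column by blast
next
  case chain
  then show ?thesis
    using that(3) chain_vertex_pos[OF chain(1)] by (simp add: vpos_def)
qed

text \<open>A fan arc reaches \<open>x = 1, 2\<close> below height \<open>2 s + 3\<close>, where the columns start, so it
  passes underneath them.\<close>
lemma fan_point_on_column_is_end:
  fixes u :: real and w i s :: nat
  assumes u: "0 \<le> u" "u \<le> 1" and w: "1 \<le> w" "w \<le> 3"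
    and x: "u * real w = real i + 1" and y: "2 * real s + 3 \<le> u * (3 * real s + 3)"
  shows "u = 1"
proof (rule ccontr)
  assume "u \<noteq> 1"
  then have "u * real w < real w"
    using u(2) w(1) by simp
  then have "i + 1 < w"
    using x by (metis of_nat_less_iff of_nat_Suc add.commute Suc_eq_plus1)
  then have "real i + 1 \<le> real w - 1"
    by (metis Suc_eq_plus1 Suc_le_eq add_le_imp_le_diff of_nat_1 of_nat_add of_nat_le_iff)
  have "real w * (2 * real s + 3) \<le> real w * (u * (3 * real s + 3))"
    using y by (intro mult_left_mono) auto
  also have "\<dots> = (3 * real s + 3) * (u * real w)"
    by (simp add: algebra_simps)
  also have "\<dots> \<le> (3 * real s + 3) * (real w - 1)"
    using x \<open>real i + 1 \<le> real w - 1\<close> by (intro mult_left_mono) auto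
  finally have "3 * real s + 3 \<le> real w * real s"
    by (simp add: algebra_simps)
  moreover have "real w * real s \<le> 3 * real s"
    using w(2) by (intro mult_right_mono) auto
  ultimately show False
    by linarith
qed

lemma fan_segment_meets_other:
  assumes w: "1 \<le> w" "w \<le> 3" and w': "3 < w'"
    and p: "p \<in> tree_segment s w" "p \<in> tree_segment s w'"
  shows "p = tree_pos s w"
proof -
  have ends: "tree_pos s (tree_parent s w) = (0, 0)" "tree_pos s w = (real w, 3 * real s + 3)"
    using w fan_vertex_pos[of w s] by (simp_all add: tree_parent_def vpos_def)
  obtain u where u: "0 \<le> u" "u \<le> 1" "fst p = u * real w" "snd p = u * (3 * real s + 3)"
    using closed_segment_coords[OF p(1)] unfolding ends by auto
  have "1 \<le> w'"
    using w' by simp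
  then have "u = 1"
  proof (cases rule: tree_segment_cases[where s = s])
    case (column i j)
    obtain v where "0 \<le> v" "fst p = real i + 1" "snd p = 2 * real s + 3 + real j + v"
      using closed_segment_coords[OF p(2)[unfolded column(7)]] by auto
    then show "u = 1"
      using fan_point_on_column_is_end[OF u(1,2) w, of i s] u(3,4) by simp
  next
    case chain
    obtain v where "0 \<le> v" "fst p = real w' - 6 * real s - 1 + v"
      using closed_segment_coords[OF p(2)] chain by auto
    then have "3 \<le> u * real w"
      using chain(1) u(3) by linarith
    moreover have "u * real w \<le> u * 3"
      using u(1) w(2) by (intro mult_left_mono) auto
    ultimately show "u = 1"
      using u(2) by linarith
  qed (use w' in simp)
  then show ?thesis
    using u ends by (simp add: prod_eq_iff)
qed

lemma fan_segments_meet: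
  assumes w: "1 \<le> w" "w \<le> 3" and w': "1 \<le> w'" "w' \<le> 3" and "w \<noteq> w'"
    and p: "p \<in> tree_segment s w" "p \<in> tree_segment s w'"
  shows "p = tree_pos s (tree_parent s w)"
proof -
  have ends: "tree_pos s (tree_parent s v) = (0, 0)" "tree_pos s v = (real v, 3 * real s + 3)"
    if "1 \<le> v" "v \<le> 3" for v
    using that fan_vertex_pos[of v s] by (simp_all add: tree_parent_def vpos_def)
  obtain u where u: "0 \<le> u" "fst p = u * real w" "snd p = u * (3 * real s + 3)"
    using closed_segment_coords[OF p(1)] ends[OF w] by auto
  obtain u' where u': "fst p = u' * real w'" "snd p = u' * (3 * real s + 3)"
    using closed_segment_coords[OF p(2)] ends[OF w'] by auto
  have "(u - u') * (3 * real s + 3) = 0"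
    using u(3) u'(2) by (simp add: algebra_simps)
  moreover have "3 * real s + 3 \<noteq> 0"
    by (simp add: add_nonneg_eq_0_iff)
  ultimately have "u = u'"
    by simp
  then have "u = 0"
    using u(2) u'(1) \<open>w \<noteq> w'\<close> by simp
  then show ?thesis
    using u ends[OF w] by (simp add: prod_eq_iff)
qed

lemma tree_parent_pair_eq:
  assumes "1 \<le> w" "1 \<le> w'" "{tree_parent s w, w} = {tree_parent s w', w'}"
  shows "w = w'"
  using tree_parent_less[of w s] tree_parent_less[of w' s] assms by (auto simp: doubleton_eq_iff)

lemma column_segment_meets:
  assumes w: "3 < w" "w < 6 * s + 4" and w': "1 \<le> w'" and "w \<noteq> w'"
    and p: "p \<in> tree_segment s w" "p \<in> tree_segment s w'"
  shows "snd p \<in> \<int>"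
proof -
  have "1 \<le> w"
    using w(1) by simp
  then obtain i j where col_w: "i < 3"
    "{tree_parent s w, w} = {col_vertex s i j, col_vertex s i (Suc j)}"
    "tree_segment s w = closed_segment (real i + 1, 2 * real s + 3 + real j)
      (real i + 1, 2 * real s + 4 + real j)"
    by (cases rule: tree_segment_cases[where s = s]) (use w in auto)
  obtain v where v: "0 \<le> v" "v \<le> 1" "fst p = real i + 1" "snd p = 2 * real s + 3 + real j + v"
    using closed_segment_coords[OF p(1)[unfolded col_w(3)]] by auto
  show ?thesis
    using w'
  proof (cases rule: tree_segment_cases[where s = s])
    case fan
    then have "p = tree_pos s w'"
      using fan_segment_meets_other[OF w' fan(1) w(1) p(2,1)] by simp
    then show ?thesis
      using tree_pos_Ints by simp
  next
    case (column i' j')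
    obtain v' where v': "0 \<le> v'" "v' \<le> 1" "fst p = real i' + 1" "snd p = 2 * real s + 3 + real j' + v'"
      using closed_segment_coords[OF p(2)[unfolded column(7)]] by auto
    have "i = i'"
      using v(3) v'(3) by simp
    moreover have "j \<noteq> j'"
    proof
      assume "j = j'"
      then have "{tree_parent s w, w} = {tree_parent s w', w'}"
        using col_w(2) column(5) \<open>i = i'\<close> by simp
      then show False
        using tree_parent_pair_eq[OF \<open>1 \<le> w\<close> w'] \<open>w \<noteq> w'\<close> by blast
    qed
    ultimately have "snd p = 2 * real s + 3 + real (max j j')"
      using v v' by (cases "j < j'") (auto simp: max_def)
    then show ?thesis
      by simp
  next
    case chain
    obtain v' where "0 \<le> v'" "fst p = real w' - 6 * real s - 1 + v'"
      using closed_segment_coords[OF p(2)] chain by auto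
    then have "fst p = 3"
      using chain(1) col_w(1) v(3) by linarith
    then have "p = tree_pos s (w' - 1) \<or> p = tree_pos s w'"
      using unit_segment_endpoint(1)[OF p(2)[unfolded chain(2)]] chain tree_pos_Ints by simp
    then show ?thesis
      using tree_pos_Ints by auto
  qed
qed

lemma chain_segment_meets:
  assumes w: "6 * s + 4 \<le> w" and w': "1 \<le> w'" and "w \<noteq> w'"
    and p: "p \<in> tree_segment s w" "p \<in> tree_segment s w'"
  shows "fst p \<in> \<int>"
  using w'
proof (cases rule: tree_segment_cases[where s = s])
  case fan
  then have "p = tree_pos s w'"
    using fan_segment_meets_other[OF w' fan(1) _ p(2,1)] w by simp
  then show ?thesis
    using tree_pos_Ints by simp
next
  case (column i j)
  obtain v where "fst p = real i + 1"
    using closed_segment_coords[OF p(2)[unfolded column(7)]] by auto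
  then have "fst p = of_nat (i + 1)"
    by simp
  then show ?thesis
    by (simp only: Ints_of_nat)
next
  case chain
  obtain v where v: "0 \<le> v" "v \<le> 1" "fst p = real w - 6 * real s - 1 + v"
    using closed_segment_coords[OF p(1)] chain_vertex_pos[OF w] w
      by (auto simp: tree_parent_def vpos_def)
  obtain v' where v': "0 \<le> v'" "v' \<le> 1" "fst p = real w' - 6 * real s - 1 + v'"
    using closed_segment_coords[OF p(2)] chain by auto
  have "real w + 1 \<le> real w' \<or> real w' + 1 \<le> real w"
    using \<open>w \<noteq> w'\<close> by linarith
  then have "fst p = real (max w w') - 6 * real s - 1"
    using v v' by (auto simp: max_def)
  then show ?thesis
    using w by (simp add: of_nat_diff)
qed

text \<open>Column segments are vertical and chain segments have unit width, all with integral
  endpoints; so two of them can only meet where one coordinate is integral, i.e.\ at an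
  endpoint.\<close>
lemma tree_segments_meet:
  assumes w: "1 \<le> w" and w': "1 \<le> w'" and "w \<noteq> w'"
    and p: "p \<in> tree_segment s w" "p \<in> tree_segment s w'"
  shows "p = tree_pos s (tree_parent s w) \<or> p = tree_pos s w"
  using w
proof (cases rule: tree_segment_cases[where s = s])
  case fan
  then show ?thesis
    using fan_segments_meet[OF w fan(1) w' _ \<open>w \<noteq> w'\<close> p] fan_segment_meets_other[OF w fan(1) _ p]
    by (cases "w' \<le> 3") simp_all
next
  case (column i j)
  then have "snd p \<in> \<int>"
    using column_segment_meets[OF column(1,2) w' \<open>w \<noteq> w'\<close> p] by simp
  then have "p \<in> {(real i + 1, 2 * real s + 3 + real j), (real i + 1, 2 * real s + 4 + real j)}"
    using unit_segment_endpoint(2)[OF p(1)[unfolded column(7)]] by simp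
  then show ?thesis
    using column(6) by blast
next
  case chain
  then show ?thesis
    using chain_segment_meets[OF chain(1) w' \<open>w \<noteq> w'\<close> p]
      unit_segment_endpoint(1)[OF p(1)[unfolded chain(2)]] tree_pos_Ints
    by simp
qed

definition tree_curve :: "nat \<Rightarrow> nat \<times> nat \<Rightarrow> real \<Rightarrow> real \<times> real" where
  "tree_curve s e = linepath (tree_pos s (fst e)) (tree_pos s (snd e))"

lemma path_image_tree_curve: "path_image (tree_curve s (tree_arc s w)) = tree_segment s w"
  by (simp add: tree_curve_def tree_arc_def closed_segment_commute insert_commute)

lemma tree_vertex_on_segment:
  assumes w: "1 \<le> w" and z: "tree_pos s z \<in> tree_segment s w"
  shows "z = tree_parent s w \<or> z = w"
proof -
  define v where "v = (if z = 0 then 1 else z)"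
  have v: "1 \<le> v" "z = tree_parent s v \<or> z = v"
    unfolding v_def by (auto simp: tree_parent_def)
  show ?thesis
  proof (cases "v = w")
    case False
    have "tree_pos s z \<in> tree_segment s v"
      using v(2) by auto
    then have "tree_pos s z = tree_pos s (tree_parent s w) \<or> tree_pos s z = tree_pos s w"
      using tree_segments_meet[OF w v(1) _ z] False by simp
    then show ?thesis
      using inj_tree_pos[of s] by (auto dest: injD)
  qed (use v in blast)
qed

lemma tree_segments_common_vertex:
  assumes w: "1 \<le> w" and w': "1 \<le> w'" and "w \<noteq> w'"
    and p: "p \<in> tree_segment s w" "p \<in> tree_segment s w'"
  shows "p \<in> tree_pos s ` ({tree_parent s w, w} \<inter> {tree_parent s w', w'})"
proof -
  have "p = tree_pos s (tree_parent s w) \<or> p = tree_pos s w"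
    "p = tree_pos s (tree_parent s w') \<or> p = tree_pos s w'"
    using tree_segments_meet[OF w w' \<open>w \<noteq> w'\<close> p] tree_segments_meet[OF w' w _ p(2,1)] \<open>w \<noteq> w'\<close>
    by simp_all
  then obtain z where "p = tree_pos s z" "z \<in> {tree_parent s w, w}" "z \<in> {tree_parent s w', w'}"
    using inj_tree_pos[of s] by (auto dest: injD)
  then show ?thesis
    by blast
qed

lemma tree_drawing: "upward_layered_drawing {0..<n} (tree_arcs s n) (xpos s) (ypos s) (tree_curve s)"
  unfolding upward_layered_drawing_def
proof (intro conjI ballI impI allI subsetI)
  show "inj_on (tree_pos s) {0..<n}"
    using inj_tree_pos by (rule inj_on_subset) simp
next
  fix e assume "e \<in> tree_arcs s n"
  then obtain w where w: "1 \<le> w" "e = tree_arc s w"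
    unfolding tree_arcs_def by auto
  show "path (tree_curve s e)" "pathstart (tree_curve s e) = tree_pos s (fst e)"
    "pathfinish (tree_curve s e) = tree_pos s (snd e)"
    by (simp_all add: tree_curve_def)
  fix t u :: real assume "0 \<le> t \<and> t < u \<and> u \<le> 1"
  moreover have "ypos s (fst e) < ypos s (snd e)"
    using tree_arc_rises[OF w(1)] w(2) by simp
  ultimately have "0 < (u - t) * (real_of_int (ypos s (snd e)) - real_of_int (ypos s (fst e)))"
    by (intro mult_pos_pos) auto
  then show "snd (tree_curve s e t) < snd (tree_curve s e u)"
    by (simp add: tree_curve_def linepath_def vpos_def algebra_simps)
next
  fix e z assume "e \<in> tree_arcs s n" and "tree_pos s z \<in> path_image (tree_curve s e)"
  moreover obtain w where w: "1 \<le> w" "e = tree_arc s w"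
    using \<open>e \<in> tree_arcs s n\<close> unfolding tree_arcs_def by auto
  ultimately have "z = tree_parent s w \<or> z = w"
    using tree_vertex_on_segment path_image_tree_curve by metis
  then show "z = fst e \<or> z = snd e"
    using w(2) by (auto simp: tree_arc_def)
next
  fix e e' p assume "e \<in> tree_arcs s n" "e' \<in> tree_arcs s n" "e \<noteq> e'"
    and p: "p \<in> path_image (tree_curve s e) \<inter> path_image (tree_curve s e')"
  obtain w w' where w: "1 \<le> w" "e = tree_arc s w" and w': "1 \<le> w'" "e' = tree_arc s w'"
    using \<open>e \<in> tree_arcs s n\<close> \<open>e' \<in> tree_arcs s n\<close> unfolding tree_arcs_def by auto
  have "w \<noteq> w'"
    using w w' \<open>e \<noteq> e'\<close> by blast
  then have "p \<in> tree_pos s ` ({tree_parent s w, w} \<inter> {tree_parent s w', w'})"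
    using tree_segments_common_vertex[OF w(1) w'(1)] p w(2) w'(2) by (simp add: path_image_tree_curve)
  moreover have "{fst e, snd e} = {tree_parent s w, w}" "{fst e', snd e'} = {tree_parent s w', w'}"
    using w(2) w'(2) by (auto simp: tree_arc_def)
  ultimately show "p \<in> tree_pos s ` ({fst e, snd e} \<inter> {fst e', snd e'})"
    by simp
qed

lemma tree_span_gt:
  assumes "6 * s + 4 \<le> n"
  shows "s < dag_span {0..<n} (tree_arcs s n)"
proof -
  obtain x y c where drawing: "upward_layered_drawing {0..<n} (tree_arcs s n) x y c"
    and span: "drawing_span (tree_arcs s n) y = dag_span {0..<n} (tree_arcs s n)"
    using dag_span_attained tree_drawing unfolding upward_planar_def by metis
  interpret three_columns_drawing "{0..<n}" "tree_arcs s n" x y c 0 "col_vertex s" s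
  proof
    show "upward_layered_drawing {0..<n} (tree_arcs s n) x y c" "0 \<in> {0..<n}"
      using drawing assms by simp_all
    show "(0, col_vertex s i s) \<in> tree_arcs s n" if "i < 3" for i
      using tree_arcs_fan[OF that] assms by simp
    show "walk_edges (col_vertex s i) (2 * s) \<subseteq> tree_arcs s n" if "i < 3" for i
      using tree_arcs_column[OF that _ assms] by (auto simp: walk_edges_def)
    show "col_vertex s i j \<noteq> 0" if "i < 3" "j \<le> 2 * s" for i j
      using col_vertex_range[OF that] by simp
    show "col_vertex s i j \<noteq> col_vertex s i' j'"
      if "i < 3" "i' < 3" "i \<noteq> i'" "j \<le> 2 * s" "j' \<le> 2 * s" for i i' j j'
      using col_vertex_eq_iff that by simp
  qed
  have "s < drawing_span (tree_arcs s n) y"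
    by (rule span_gt) (simp add: tree_arcs_def)
  then show ?thesis
    using span by simp
qed

theorem mainTheorem3:
  fixes l n :: nat
  assumes "l \<ge> 1" and "n \<ge> 3 * l + 4"
  shows "\<exists>(V :: nat set) E. directed_tree V E \<and> card V = n \<and>
           (\<forall>v\<in>V. degree E v \<le> 3) \<and>
           (\<forall>k u w. (u, w) \<in> E ^^ k \<longrightarrow> k \<le> l) \<and>
           upward_planar V E \<and>
           of_int \<lceil>(real l + 1) / 2\<rceil> \<le> int (dag_span V E)"
proof -
  define s where "s = l div 2"
  have s: "max (2 * s) 1 \<le> l" "6 * s + 4 \<le> n"
    using assms unfolding s_def by auto
  have "2 * real s \<le> real l" "real l \<le> 2 * real s + 1"
    unfolding s_def by linarith+
  then have "\<lceil>(real l + 1) / 2\<rceil> = int s + 1"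
    by (intro ceiling_unique) simp_all
  then have span: "of_int \<lceil>(real l + 1) / 2\<rceil> \<le> int (dag_span {0..<n} (tree_arcs s n))"
    using tree_span_gt[OF s(2)] by simp
  show ?thesis
  proof (intro exI conjI allI impI ballI)
    show "directed_tree {0..<n} (tree_arcs s n)"
      using directed_tree_tree_arcs s(2) by simp
    show "upward_planar {0..<n} (tree_arcs s n)"
      using tree_drawing unfolding upward_planar_def by blast
    show "k \<le> l" if "(u, w) \<in> tree_arcs s n ^^ k" for k u w
      using tree_walk_length[OF that] s(1) by linarith
  qed (use degree_tree_arcs span in simp_all)
qed

end
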